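(* Let $0<b<B$. For every instance $\langle A,f,c\rangle$ (with $f$ monotone) such that $p(\{i\})\le b$ for all $i\in A$, $$\frac{\textsc{Max-Profit}(B)}{\textsc{Max-Profit}(b)}\le\frac{\textsc{Max-Reward}(B)}{\textsc{Max-Reward}(b)}.$$
   Context: An instance $\langle A,f,c\rangle$ consists of a finite set $A$ of agents, a monotone nondecreasing $f:2^A\to[0,1]$, and costs $c_i\ge0$. For $S\subseteq A$, $i\in S$: $f_S(i)=f(S)-f(S\setminus\{i\})$; $p(S)=\sum_{i\in S}c_i/f_S(i)$ (conventions: $0$ if $c_i=0=f_S(i)$, $\infty$ if $c_i>0=f_S(i)$); the profit is $g(S)=(1-p(S))f(S)$. $\textsc{Max-Profit}(B)=\max\{g(S):p(S)\le B\}$ and $\textsc{Max-Reward}(B)=\max\{f(S):p(S)\le B\}$. *)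

theory Defs
  imports Complex_Main "HOL-Library.Extended_Real"
begin

definition marg :: "('a set \<Rightarrow> real) \<Rightarrow> 'a set \<Rightarrow> 'a \<Rightarrow> real" where
  "marg f S i = f S - f (S - {i})"

definition pterm :: "('a set \<Rightarrow> real) \<Rightarrow> ('a \<Rightarrow> real) \<Rightarrow> 'a set \<Rightarrow> 'a \<Rightarrow> ereal" where
  "pterm f c S i =
     (if marg f S i = 0 then (if c i = 0 then 0 else \<infinity>) else ereal (c i / marg f S i))"

definition price :: "('a set \<Rightarrow> real) \<Rightarrow> ('a \<Rightarrow> real) \<Rightarrow> 'a set \<Rightarrow> ereal" where
  "price f c S = (\<Sum>i\<in>S. pterm f c S i)"

text \<open>Profit g(S) = (1 - p(S)) f(S); only used for S with finite price.\<close>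
definition profit :: "('a set \<Rightarrow> real) \<Rightarrow> ('a \<Rightarrow> real) \<Rightarrow> 'a set \<Rightarrow> real" where
  "profit f c S = (1 - real_of_ereal (price f c S)) * f S"

definition max_profit :: "'a set \<Rightarrow> ('a set \<Rightarrow> real) \<Rightarrow> ('a \<Rightarrow> real) \<Rightarrow> real \<Rightarrow> real" where
  "max_profit A f c B = Max {profit f c S | S. S \<subseteq> A \<and> price f c S \<le> ereal B}"

definition max_reward :: "'a set \<Rightarrow> ('a set \<Rightarrow> real) \<Rightarrow> ('a \<Rightarrow> real) \<Rightarrow> real \<Rightarrow> real" where
  "max_reward A f c B = Max {f S | S. S \<subseteq> A \<and> price f c S \<le> ereal B}"

end

theory Submission
  imports Defs
begin

text \<open>Let \<open>S\<close> be a profit maximiser for budget \<open>B\<close>, of price \<open>p\<close>. If \<open>p \<le> b\<close>, then \<open>S\<close> is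
  affordable for \<open>b\<close> and the profit ratio is at most \<open>1\<close>, while the reward ratio is at least \<open>1\<close>.
  Otherwise \<open>Max-Profit(B) \<le> (1 - b) Max-Reward(B)\<close>, whereas the reward maximiser for \<open>b\<close>
  shows \<open>Max-Profit(b) \<ge> (1 - b) Max-Reward(b)\<close>; dividing gives the claim
  (when \<open>Max-Profit(b) = 0\<close> the left side is \<open>0\<close> by the convention \<open>x / 0 = 0\<close>).\<close>

definition affordable_sets :: "'a set \<Rightarrow> ('a set \<Rightarrow> real) \<Rightarrow> ('a \<Rightarrow> real) \<Rightarrow> real \<Rightarrow> 'a set set"
  where "affordable_sets A f c x = {S. S \<subseteq> A \<and> price f c S \<le> ereal x}"

lemma max_profit_eq_Max_image: "max_profit A f c x = Max (profit f c ` affordable_sets A f c x)"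
  unfolding max_profit_def affordable_sets_def by (simp add: setcompr_eq_image)

lemma max_reward_eq_Max_image: "max_reward A f c x = Max (f ` affordable_sets A f c x)"
  unfolding max_reward_def affordable_sets_def by (simp add: setcompr_eq_image)

lemma affordable_sets_mono: "x \<le> y \<Longrightarrow> affordable_sets A f c x \<subseteq> affordable_sets A f c y"
  unfolding affordable_sets_def by (auto intro: order_trans)

lemma finite_affordable_sets: "finite A \<Longrightarrow> finite (affordable_sets A f c x)"
  unfolding affordable_sets_def by (rule finite_subset[of _ "Pow A"]) auto

lemma empty_in_affordable_sets: "0 \<le> x \<Longrightarrow> {} \<in> affordable_sets A f c x"
  unfolding affordable_sets_def price_def by simp

lemma ratio_le_ratio:
  fixes pB pb rB rb b :: real
  assumes "0 \<le> pb" "pb \<le> rb" "rb \<le> rB" "(1 - b) * rb \<le> pb"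
    and "pB \<le> pb \<or> pB \<le> (1 - b) * rB"
  shows "pB / pb \<le> rB / rb"
proof (cases "pb = 0")
  case True
  then show ?thesis using assms by simp
next
  case False
  with assms have pos: "0 < pb" "0 < rb" by auto
  consider "pB \<le> pb" | "pB \<le> (1 - b) * rB" "b \<ge> 1" | "pB \<le> (1 - b) * rB" "b < 1"
    using assms(5) by linarith
  then show ?thesis
  proof cases
    case 1
    then have "pB / pb \<le> 1" using pos by simp
    moreover have "1 \<le> rB / rb" using assms(3) pos by simp
    ultimately show ?thesis by linarith
  next
    case 2
    then have "pB \<le> 0" using assms(2,3) pos by (smt (verit) mult_nonpos_nonneg)
    then have "pB / pb \<le> 0" using pos by (simp add: divide_nonpos_pos)
    moreover have "0 \<le> rB / rb" using pos assms(3) by simp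
    ultimately show ?thesis by linarith
  next
    case 3
    have "pB / pb \<le> (1 - b) * rB / pb" using 3 pos by (simp add: divide_right_mono)
    also have "\<dots> \<le> (1 - b) * rB / ((1 - b) * rb)"
      using 3 pos assms by (intro divide_left_mono) auto
    also have "\<dots> = rB / rb" using 3 by simp
    finally show ?thesis .
  qed
qed

locale agent_instance =
  fixes A :: "'a set" and f :: "'a set \<Rightarrow> real" and c :: "'a \<Rightarrow> real"
  assumes finite_agents: "finite A"
    and reward_nonneg: "\<And>S. S \<subseteq> A \<Longrightarrow> 0 \<le> f S"
    and reward_mono: "\<And>S T. S \<subseteq> T \<Longrightarrow> T \<subseteq> A \<Longrightarrow> f S \<le> f T"
    and cost_nonneg: "\<And>i. i \<in> A \<Longrightarrow> 0 \<le> c i"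
begin

lemma pterm_nonneg:
  assumes "S \<subseteq> A" "i \<in> S"
  shows "0 \<le> pterm f c S i"
proof -
  have "0 \<le> marg f S i"
    using reward_mono[of "S - {i}" S] assms by (auto simp: marg_def)
  then show ?thesis using cost_nonneg[of i] assms by (auto simp: pterm_def)
qed

lemma price_nonneg: "S \<subseteq> A \<Longrightarrow> 0 \<le> price f c S"
  unfolding price_def by (rule sum_nonneg) (rule pterm_nonneg)

lemma affordable_price_real:
  assumes "S \<in> affordable_sets A f c x"
  obtains p where "price f c S = ereal p" "0 \<le> p" "p \<le> x" "profit f c S = (1 - p) * f S"
proof -
  have S: "S \<subseteq> A" "price f c S \<le> ereal x"
    using assms by (auto simp: affordable_sets_def)
  with price_nonneg obtain p where "price f c S = ereal p"
    by (cases "price f c S") force+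
  with S price_nonneg[OF S(1)] show ?thesis
    by (intro that) (auto simp: profit_def)
qed

lemma max_profit_ge: "S \<in> affordable_sets A f c x \<Longrightarrow> profit f c S \<le> max_profit A f c x"
  unfolding max_profit_eq_Max_image by (simp add: finite_affordable_sets finite_agents)

lemma max_reward_ge: "S \<in> affordable_sets A f c x \<Longrightarrow> f S \<le> max_reward A f c x"
  unfolding max_reward_eq_Max_image by (simp add: finite_affordable_sets finite_agents)

lemma max_profit_attained:
  assumes "0 \<le> x"
  obtains S where "S \<in> affordable_sets A f c x" "max_profit A f c x = profit f c S"
proof -
  have "Max (profit f c ` affordable_sets A f c x) \<in> profit f c ` affordable_sets A f c x"
    using empty_in_affordable_sets[OF assms]
    by (intro Max_in) (auto simp: finite_affordable_sets finite_agents)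
  with that show ?thesis unfolding max_profit_eq_Max_image by auto
qed

lemma max_reward_attained:
  assumes "0 \<le> x"
  obtains S where "S \<in> affordable_sets A f c x" "max_reward A f c x = f S"
proof -
  have "Max (f ` affordable_sets A f c x) \<in> f ` affordable_sets A f c x"
    using empty_in_affordable_sets[OF assms]
    by (intro Max_in) (auto simp: finite_affordable_sets finite_agents)
  with that show ?thesis unfolding max_reward_eq_Max_image by auto
qed

lemma max_profit_nonneg: "0 \<le> x \<Longrightarrow> 0 \<le> max_profit A f c x"
  using max_profit_ge[OF empty_in_affordable_sets, of x] reward_nonneg[of "{}"]
  by (simp add: profit_def price_def)

lemma max_profit_le_max_reward:
  assumes "0 \<le> x"
  shows "max_profit A f c x \<le> max_reward A f c x"
proof -
  obtain S where S: "S \<in> affordable_sets A f c x" "max_profit A f c x = profit f c S"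
    using max_profit_attained[OF assms] .
  then obtain p where p: "0 \<le> p" "profit f c S = (1 - p) * f S"
    using affordable_price_real[OF S(1)] by metis
  have "0 \<le> f S" using S(1) reward_nonneg by (auto simp: affordable_sets_def)
  with p have "0 \<le> p * f S" by simp
  with p have "profit f c S \<le> f S" by (simp add: algebra_simps)
  with S max_reward_ge show ?thesis by fastforce
qed

lemma max_reward_mono: "0 \<le> x \<Longrightarrow> x \<le> y \<Longrightarrow> max_reward A f c x \<le> max_reward A f c y"
  by (metis max_reward_attained max_reward_ge affordable_sets_mono subsetD)

lemma discounted_max_reward_le_max_profit:
  assumes "0 \<le> x"
  shows "(1 - x) * max_reward A f c x \<le> max_profit A f c x"
proof -
  obtain S where S: "S \<in> affordable_sets A f c x" "max_reward A f c x = f S"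
    using max_reward_attained[OF assms] .
  then obtain p where p: "p \<le> x" "profit f c S = (1 - p) * f S"
    using affordable_price_real[OF S(1)] by metis
  have "0 \<le> f S" using S(1) reward_nonneg by (auto simp: affordable_sets_def)
  with p have "(1 - x) * f S \<le> profit f c S" by (simp add: mult_right_mono)
  with S max_profit_ge show ?thesis by fastforce
qed

lemma max_profit_dichotomy:
  assumes "0 \<le> x" "x \<le> y"
  shows "max_profit A f c y \<le> max_profit A f c x
    \<or> max_profit A f c y \<le> (1 - x) * max_reward A f c y"
proof -
  have "0 \<le> y" using assms by linarith
  then obtain S where S: "S \<in> affordable_sets A f c y" "max_profit A f c y = profit f c S"
    by (rule max_profit_attained)
  then obtain p where p: "price f c S = ereal p" "profit f c S = (1 - p) * f S"
    using affordable_price_real[OF S(1)] by metis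
  show ?thesis
  proof (cases "p \<le> x")
    case True
    then have "S \<in> affordable_sets A f c x"
      using S(1) p(1) by (auto simp: affordable_sets_def)
    then show ?thesis using S(2) max_profit_ge by simp
  next
    case False
    have fS: "0 \<le> f S" "f S \<le> max_reward A f c y"
      using S(1) reward_nonneg max_reward_ge by (auto simp: affordable_sets_def)
    have less: "profit f c S \<le> (1 - x) * f S"
      using False p(2) fS(1) by (simp add: mult_right_mono)
    show ?thesis
    proof (cases "x \<le> 1")
      case True
      then have "(1 - x) * f S \<le> (1 - x) * max_reward A f c y"
        using fS(2) by (simp add: mult_left_mono)
      then show ?thesis using less S(2) by simp
    next
      case False
      then have "(1 - x) * f S \<le> 0" using fS(1) by (simp add: mult_nonpos_nonneg)
      then show ?thesis using less S(2) max_profit_nonneg[OF assms(1)] by simp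
    qed
  qed
qed

end

theorem mainTheorem17:
  fixes A :: "'a set" and f :: "'a set \<Rightarrow> real" and c :: "'a \<Rightarrow> real" and b B :: real
  assumes "0 < b" and "b < B"
    and "finite A"
    and "\<And>S. S \<subseteq> A \<Longrightarrow> 0 \<le> f S \<and> f S \<le> 1"
    and "\<And>S T. S \<subseteq> T \<Longrightarrow> T \<subseteq> A \<Longrightarrow> f S \<le> f T"
    and "\<And>i. i \<in> A \<Longrightarrow> 0 \<le> c i"
    and "\<And>i. i \<in> A \<Longrightarrow> price f c {i} \<le> ereal b"
  shows "max_profit A f c B / max_profit A f c b \<le> max_reward A f c B / max_reward A f c b"
proof -
  interpret agent_instance A f c
    using assms(3-6) by unfold_locales auto
  have b: "0 \<le> b" "b \<le> B" using assms(1,2) by auto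
  show ?thesis
    using max_profit_nonneg[OF b(1)] max_profit_le_max_reward[OF b(1)]
      max_reward_mono[OF b] discounted_max_reward_le_max_profit[OF b(1)]
      max_profit_dichotomy[OF b]
    by (rule ratio_le_ratio)
qed

end
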